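(* Let $q\geq 2$ be an integer and $f\in L^2(\mathbb{R}_+^q)$. Let $r\in \{1,\ldots, q-1\}$ and $r' \in \{1,\ldots,q\}$ be such that $r'+2r >2q$. Then, for every integer $p\geq 1$ and every $g\in L^2(\mathbb{R}_+^{p})$ with $r'+2r-2q\le p$, $$((g \otimes f) \frown_r f) \frown_{r'} f =g \frown_{r'+2r-2q} ((f \frown_r f) \frown_{2q-2r} f).$$ In particular, if $(f_n)$ is a sequence in $L^2(\mathbb{R}_+^q)$ such that $(f_n\frown_s f_n)\frown_{s'}f_n\to0$ in $L^2$ for all $s,s'\in\{1,\ldots,q-1\}$ with $s'+2s\le 2q$ and $s+s'\neq q$, then $((g\otimes f_n) \frown_r f_n) \frown_{r'} f_n \to 0$ in $L^2(\mathbb{R}_+^{p+3q-2r-2r'})$ as $n\to\infty$.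
   Context: Contraction: for $a\in L^2(\mathbb{R}_+^m)$, $b\in L^2(\mathbb{R}_+^k)$ and $1\le s\le m\wedge k$, $a\frown_s b(t_1,\ldots,t_{m+k-2s})=\int a(t_1,\ldots,t_{m-s},x_1,\ldots,x_s)b(x_s,\ldots,x_1,t_{m-s+1},\ldots,t_{m+k-2s})\,dx_1\cdots dx_s$; $a\frown_0 b=a\otimes b$. *)

theory Defs
  imports "HOL-Analysis.Analysis"
begin

text \<open>The half-line R_+ with Lebesgue measure, and R_+^m as a finite product
  measure indexed by {..<m} (coordinates 0,...,m-1; points are extensional).\<close>
definition Rp :: "real measure" where
  "Rp = restrict_space lborel {0..}"

definition Mq :: "nat \<Rightarrow> (nat \<Rightarrow> real) measure" where
  "Mq m = PiM {..<m} (\<lambda>_. Rp)"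

definition L2 :: "nat \<Rightarrow> ((nat \<Rightarrow> real) \<Rightarrow> real) \<Rightarrow> bool" where
  "L2 m f \<longleftrightarrow> f \<in> borel_measurable (Mq m) \<and> integrable (Mq m) (\<lambda>x. (f x)\<^sup>2)"

definition L2norm :: "nat \<Rightarrow> ((nat \<Rightarrow> real) \<Rightarrow> real) \<Rightarrow> real" where
  "L2norm m f = sqrt (\<integral>x. (f x)\<^sup>2 \<partial>Mq m)"

definition tensor :: "nat \<Rightarrow> nat \<Rightarrow> ((nat \<Rightarrow> real) \<Rightarrow> real) \<Rightarrow> ((nat \<Rightarrow> real) \<Rightarrow> real)
    \<Rightarrow> (nat \<Rightarrow> real) \<Rightarrow> real" where
  "tensor m k a b = (\<lambda>t. a (\<lambda>i. if i < m then t i else undefined)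
                        * b (\<lambda>i. if i < k then t (m + i) else undefined))"

text \<open>Contraction a \<frown>_s b for a on R_+^m, b on R_+^k, 0 \<le> s \<le> min m k:
  (a \<frown>_s b)(t_1..t_{m+k-2s}) = \<integral> a(t_1..t_{m-s},x_1..x_s) b(x_s..x_1,t_{m-s+1}..t_{m+k-2s}) dx,
  and a \<frown>_0 b = a \<otimes> b.  (0-based indices below.)\<close>
definition contr :: "nat \<Rightarrow> nat \<Rightarrow> nat \<Rightarrow> ((nat \<Rightarrow> real) \<Rightarrow> real) \<Rightarrow> ((nat \<Rightarrow> real) \<Rightarrow> real)
    \<Rightarrow> (nat \<Rightarrow> real) \<Rightarrow> real" where
  "contr m k s a b =
    (if s = 0 then tensor m k a b
     else (\<lambda>t. \<integral>x. a (\<lambda>i. if i < m - s then t i else if i < m then x (i - (m - s)) else undefined)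
                  * b (\<lambda>i. if i < s then x (s - 1 - i)
                           else if i < k then t (m - s + (i - s)) else undefined) \<partial>Mq s))"

end

theory Submission
  imports Defs
begin

text \<open>With \<open>c = 2q - 2r\<close>, the contraction \<open>\<frown>\<^sub>r\<close> only touches the \<open>f\<close>-factor of \<open>g \<otimes> f\<close>,
  so \<open>(g \<otimes> f) \<frown>\<^sub>r f = g \<otimes> (f \<frown>\<^sub>r f)\<close>, a function of \<open>p + c\<close> variables. Since \<open>r' > c\<close>, the
  second contraction consumes all \<open>c\<close> variables of \<open>f \<frown>\<^sub>r f\<close> together with \<open>r' - c\<close> variables
  of \<open>g\<close>, and Fubini turns it into \<open>g \<frown>\<^bsub>r'-c\<^esub> ((f \<frown>\<^sub>r f) \<frown>\<^sub>c f)\<close>. The integrability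
  that Fubini needs holds for almost every outer point, by the Cauchy--Schwarz bound
  \<open>\<parallel>a \<frown>\<^sub>s b\<parallel> \<le> \<parallel>a\<parallel> \<parallel>b\<parallel>\<close> applied to absolute values. The same bound then gives
  \<open>\<parallel>((g \<otimes> f\<^sub>n) \<frown>\<^sub>r f\<^sub>n) \<frown>\<^sub>r\<^sub>' f\<^sub>n\<parallel> \<le> \<parallel>g\<parallel> \<parallel>(f\<^sub>n \<frown>\<^sub>r f\<^sub>n) \<frown>\<^sub>c f\<^sub>n\<parallel>\<close>, and
  \<open>(r, c)\<close> is one of the admissible pairs of the hypothesis.\<close>

section \<open>Reindexing, splitting and reversing coordinates\<close>

lemma vimage_reindex_PiE:
  assumes f: "bij_betw f I J" and A: "\<And>i. i \<in> I \<Longrightarrow> A i \<subseteq> space N"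
  shows "(\<lambda>\<omega>. \<lambda>i\<in>I. \<omega> (f i)) -` Pi\<^sub>E I A \<inter> space (Pi\<^sub>M J (\<lambda>_. N))
    = (\<Pi>\<^sub>E j\<in>J. A (the_inv_into I f j))"
proof (intro set_eqI iffI)
  let ?g = "the_inv_into I f"
  have g: "\<And>j. j \<in> J \<Longrightarrow> ?g j \<in> I" "\<And>i. i \<in> I \<Longrightarrow> ?g (f i) = i" "\<And>j. j \<in> J \<Longrightarrow> f (?g j) = j"
    using f bij_betw_apply[OF bij_betw_the_inv_into[OF f]]
    by (auto simp: bij_betw_def the_inv_into_f_f f_the_inv_into_f_bij_betw)
  fix \<omega>
  show "\<omega> \<in> (\<Pi>\<^sub>E j\<in>J. A (?g j))" if \<omega>: "\<omega> \<in> (\<lambda>\<omega>. \<lambda>i\<in>I. \<omega> (f i)) -` Pi\<^sub>E I A \<inter> space (Pi\<^sub>M J (\<lambda>_. N))"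
  proof -
    have "\<omega> j \<in> A (?g j)" if "j \<in> J" for j
      using \<omega> g(1,3)[OF that] by (auto simp: PiE_iff)
    then show ?thesis
      using \<omega> by (auto simp: space_PiM PiE_iff)
  qed
  show "\<omega> \<in> (\<lambda>\<omega>. \<lambda>i\<in>I. \<omega> (f i)) -` Pi\<^sub>E I A \<inter> space (Pi\<^sub>M J (\<lambda>_. N))" if \<omega>: "\<omega> \<in> (\<Pi>\<^sub>E j\<in>J. A (?g j))"
  proof -
    have "f i \<in> J" if "i \<in> I" for i
      using f that by (auto simp: bij_betw_def)
    then have "\<omega> (f i) \<in> A i" if "i \<in> I" for i
      using \<omega> that g(2)[OF that] by (metis PiE_mem)
    moreover have "\<omega> j \<in> space N" if "j \<in> J" for j
      using \<omega> that A[OF g(1)[OF that]] by auto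
    ultimately show ?thesis
      using \<omega> by (auto simp: space_PiM PiE_iff)
  qed
qed

lemma distr_PiM_reindex_bij:
  assumes N: "sigma_finite_measure N" and f: "bij_betw f I J" and J: "finite J"
  shows "distr (Pi\<^sub>M J (\<lambda>_. N)) (Pi\<^sub>M I (\<lambda>_. N)) (\<lambda>\<omega>. \<lambda>i\<in>I. \<omega> (f i)) = Pi\<^sub>M I (\<lambda>_. N)"
proof -
  interpret product_sigma_finite "\<lambda>_. N"
    using N by (simp add: product_sigma_finite_def)
  have I: "finite I" using f J bij_betw_finite by blast
  have meas: "(\<lambda>\<omega>. \<lambda>i\<in>I. \<omega> (f i)) \<in> measurable (Pi\<^sub>M J (\<lambda>_. N)) (Pi\<^sub>M I (\<lambda>_. N))"
    using f by (intro measurable_restrict measurable_component_singleton) (auto simp: bij_betw_def)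
  have g: "bij_betw (the_inv_into I f) J I"
    using f by (rule bij_betw_the_inv_into)
  show ?thesis
  proof (rule PiM_eqI[OF I])
    fix A assume A: "\<And>i. i \<in> I \<Longrightarrow> A i \<in> sets N"
    have "emeasure (distr (Pi\<^sub>M J (\<lambda>_. N)) (Pi\<^sub>M I (\<lambda>_. N)) (\<lambda>\<omega>. \<lambda>i\<in>I. \<omega> (f i))) (Pi\<^sub>E I A)
        = (\<Prod>j\<in>J. emeasure N (A (the_inv_into I f j)))"
      using meas A I J bij_betw_apply[OF g]
        vimage_reindex_PiE[OF f, of A N, OF sets.sets_into_space[OF A]]
      by (simp add: emeasure_distr sets_PiM_I_finite emeasure_PiM)
    also have "\<dots> = (\<Prod>i\<in>I. emeasure N (A i))"
      using prod.reindex_bij_betw[OF g, of "\<lambda>i. emeasure N (A i)"] by simp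
    finally show "emeasure (distr (Pi\<^sub>M J (\<lambda>_. N)) (Pi\<^sub>M I (\<lambda>_. N)) (\<lambda>\<omega>. \<lambda>i\<in>I. \<omega> (f i))) (Pi\<^sub>E I A)
        = (\<Prod>i\<in>I. emeasure N (A i))" .
  qed simp
qed

lemma sigma_finite_Rp: "sigma_finite_measure Rp"
  unfolding Rp_def
  by (rule sigma_finite_measure_restrict_space) (auto simp: lborel.sigma_finite_measure_axioms)

interpretation Rp: product_sigma_finite "\<lambda>_. Rp"
  unfolding product_sigma_finite_def using sigma_finite_Rp by simp

lemma sigma_finite_Mq: "sigma_finite_measure (Mq n)"
  unfolding Mq_def by (rule Rp.sigma_finite) simp

lemma pair_sigma_finite_Mq: "pair_sigma_finite (Mq m) (Mq n)"
  unfolding pair_sigma_finite_def using sigma_finite_Mq by simp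

lemma space_Mq: "space (Mq n) = (\<Pi>\<^sub>E i\<in>{..<n}. {0::real..})"
  unfolding Mq_def Rp_def by (simp add: space_PiM)

lemma measurable_Mq_coord: "j < n \<Longrightarrow> (\<lambda>x. x j) \<in> measurable (Mq n) Rp"
  unfolding Mq_def by (rule measurable_component_singleton) simp

lemma measurable_Mq_I:
  assumes "\<And>i. i < n \<Longrightarrow> (\<lambda>x. h x i) \<in> measurable M Rp"
    and "\<And>x i. n \<le> i \<Longrightarrow> h x i = undefined"
  shows "h \<in> measurable M (Mq n)"
  unfolding Mq_def
proof (rule measurable_PiM_single')
  show "h \<in> space M \<rightarrow> (\<Pi>\<^sub>E i\<in>{..<n}. space Rp)"
    using assms measurable_space[OF assms(1)] by (auto simp: PiE_iff extensional_def)
qed (use assms(1) in auto)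

lemma measurable_If_const:
  "(P \<Longrightarrow> f \<in> measurable M N) \<Longrightarrow> (\<not> P \<Longrightarrow> g \<in> measurable M N) \<Longrightarrow>
    (\<lambda>x. if P then f x else g x) \<in> measurable M N"
  by (cases P) auto

definition join_coords :: "nat \<Rightarrow> nat \<Rightarrow> (nat \<Rightarrow> real) \<times> (nat \<Rightarrow> real) \<Rightarrow> nat \<Rightarrow> real" where
  "join_coords m n = (\<lambda>(x, y) i. if i < m then x i else if i < m + n then y (i - m) else undefined)"

definition rev_coords :: "nat \<Rightarrow> (nat \<Rightarrow> real) \<Rightarrow> nat \<Rightarrow> real" where
  "rev_coords n x = (\<lambda>i. if i < n then x (n - 1 - i) else undefined)"

lemma distr_rev_coords: "distr (Mq n) (Mq n) (rev_coords n) = Mq n"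
proof -
  have bij: "bij_betw (\<lambda>i. n - 1 - i) {..<n} {..<n}"
    by (rule bij_betw_byWitness[where f'="\<lambda>i. n - 1 - i"]) auto
  have "rev_coords n = (\<lambda>\<omega>. \<lambda>i\<in>{..<n}. \<omega> (n - 1 - i))"
    by (auto simp: rev_coords_def fun_eq_iff)
  then show ?thesis
    unfolding Mq_def using distr_PiM_reindex_bij[OF sigma_finite_Rp bij] by simp
qed

lemma distr_join_coords: "distr (Mq m \<Otimes>\<^sub>M Mq n) (Mq (m + n)) (join_coords m n) = Mq (m + n)"
proof -
  define J where "J = {m..<m + n}"
  define shift where "shift = (\<lambda>\<omega>. \<lambda>i\<in>J. \<omega> (i - m) :: real)"
  have bij: "bij_betw (\<lambda>i. i - m) J {..<n}"
    unfolding J_def by (rule bij_betw_byWitness[where f'="\<lambda>i. i + m"]) auto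
  have shift_meas: "shift \<in> measurable (Mq n) (Pi\<^sub>M J (\<lambda>_. Rp))"
    unfolding shift_def Mq_def J_def
    by (intro measurable_restrict measurable_component_singleton) auto
  have shift_distr: "distr (Mq n) (Pi\<^sub>M J (\<lambda>_. Rp)) shift = Pi\<^sub>M J (\<lambda>_. Rp)"
    unfolding shift_def Mq_def using distr_PiM_reindex_bij[OF sigma_finite_Rp bij] by simp
  have pair_meas: "(\<lambda>(x, y). (x, shift y)) \<in> measurable (Mq m \<Otimes>\<^sub>M Mq n) (Mq m \<Otimes>\<^sub>M Pi\<^sub>M J (\<lambda>_. Rp))"
    unfolding split_beta'
    by (intro measurable_Pair measurable_fst'' measurable_compose[OF measurable_snd shift_meas])
      simp
  have pair: "distr (Mq m \<Otimes>\<^sub>M Mq n) (Mq m \<Otimes>\<^sub>M Pi\<^sub>M J (\<lambda>_. Rp)) (\<lambda>(x, y). (x, shift y))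
      = Mq m \<Otimes>\<^sub>M Pi\<^sub>M J (\<lambda>_. Rp)"
    using pair_measure_distr[OF measurable_ident_sets[OF refl, of "Mq m"] shift_meas] shift_distr
    by (simp add: J_def Rp.sigma_finite)
  have merge_meas: "merge {..<m} J \<in> measurable (Mq m \<Otimes>\<^sub>M Pi\<^sub>M J (\<lambda>_. Rp)) (Mq (m + n))"
    using measurable_merge[of "{..<m}" J "\<lambda>_. Rp"] by (simp add: Mq_def J_def ivl_disj_un_one(2))
  have "join_coords m n = merge {..<m} J \<circ> (\<lambda>(x, y). (x, shift y))"
    by (auto simp: fun_eq_iff join_coords_def merge_def shift_def J_def)
  then have "distr (Mq m \<Otimes>\<^sub>M Mq n) (Mq (m + n)) (join_coords m n)
      = distr (distr (Mq m \<Otimes>\<^sub>M Mq n) (Mq m \<Otimes>\<^sub>M Pi\<^sub>M J (\<lambda>_. Rp)) (\<lambda>(x, y). (x, shift y)))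
          (Mq (m + n)) (merge {..<m} J)"
    using merge_meas pair_meas by (simp only: distr_distr)
  also have "\<dots> = distr (Mq m \<Otimes>\<^sub>M Pi\<^sub>M J (\<lambda>_. Rp)) (Mq (m + n)) (merge {..<m} J)"
    by (simp only: pair)
  also have "\<dots> = Mq (m + n)"
    using Rp.distr_merge[of "{..<m}" J]
    by (simp add: Mq_def J_def ivl_disj_un_one(2) ivl_disj_int_one(2))
  finally show ?thesis .
qed

lemma measurable_join_coords: "join_coords m n \<in> measurable (Mq m \<Otimes>\<^sub>M Mq n) (Mq (m + n))"
  by (rule measurable_Mq_I)
    (auto simp: join_coords_def split_beta intro!: measurable_If_const
      measurable_compose[OF measurable_fst measurable_Mq_coord]
      measurable_compose[OF measurable_snd measurable_Mq_coord])

lemma measurable_rev_coords: "rev_coords n \<in> measurable (Mq n) (Mq n)"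
  by (rule measurable_Mq_I)
    (auto simp: rev_coords_def intro!: measurable_If_const measurable_Mq_coord)

lemma measurable_join_coords_left:
  "u \<in> space (Mq m) \<Longrightarrow> (\<lambda>y. join_coords m n (u, y)) \<in> measurable (Mq n) (Mq (m + n))"
  using measurable_comp[OF measurable_Pair1' measurable_join_coords] by (simp add: comp_def)

lemma measurable_join_coords_right:
  "v \<in> space (Mq n) \<Longrightarrow> (\<lambda>x. join_coords m n (x, v)) \<in> measurable (Mq m) (Mq (m + n))"
  using measurable_comp[OF measurable_Pair2' measurable_join_coords] by (simp add: comp_def)

lemma nn_integral_rev_coords:
  "f \<in> borel_measurable (Mq n) \<Longrightarrow> (\<integral>\<^sup>+x. f (rev_coords n x) \<partial>Mq n) = (\<integral>\<^sup>+x. f x \<partial>Mq n)"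
  using nn_integral_distr[OF measurable_rev_coords, of f] by (simp add: distr_rev_coords)

lemma nn_integral_join_coords:
  assumes f: "f \<in> borel_measurable (Mq (m + n))"
  shows "(\<integral>\<^sup>+x. f x \<partial>Mq (m + n)) = (\<integral>\<^sup>+u. \<integral>\<^sup>+v. f (join_coords m n (u, v)) \<partial>Mq n \<partial>Mq m)"
proof -
  interpret pair_sigma_finite "Mq m" "Mq n" by (rule pair_sigma_finite_Mq)
  have "(\<lambda>x. f (join_coords m n x)) \<in> borel_measurable (Mq m \<Otimes>\<^sub>M Mq n)"
    using measurable_comp[OF measurable_join_coords f] by (simp add: comp_def)
  from M2.nn_integral_fst[OF this] show ?thesis
    using nn_integral_distr[OF measurable_join_coords, of f] f by (simp add: distr_join_coords)
qed

lemma nn_integral_join_coords_swap: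
  assumes f: "f \<in> borel_measurable (Mq (m + n))"
  shows "(\<integral>\<^sup>+x. f x \<partial>Mq (m + n)) = (\<integral>\<^sup>+v. \<integral>\<^sup>+u. f (join_coords m n (u, v)) \<partial>Mq m \<partial>Mq n)"
proof -
  interpret pair_sigma_finite "Mq m" "Mq n" by (rule pair_sigma_finite_Mq)
  have "(\<lambda>x. f (join_coords m n x)) \<in> borel_measurable (Mq m \<Otimes>\<^sub>M Mq n)"
    using measurable_comp[OF measurable_join_coords f] by (simp add: comp_def)
  from Fubini[OF this] show ?thesis
    using nn_integral_join_coords[OF f] by simp
qed

lemma integral_join_coords:
  fixes f :: "(nat \<Rightarrow> real) \<Rightarrow> real"
  assumes f: "integrable (Mq (m + n)) f"
  shows "(\<integral>x. f x \<partial>Mq (m + n)) = (\<integral>u. \<integral>v. f (join_coords m n (u, v)) \<partial>Mq n \<partial>Mq m)"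
proof -
  interpret pair_sigma_finite "Mq m" "Mq n" by (rule pair_sigma_finite_Mq)
  have fb: "f \<in> borel_measurable (Mq (m + n))" using f by auto
  have "integrable (Mq m \<Otimes>\<^sub>M Mq n) (\<lambda>x. f (join_coords m n x))"
    using f integrable_distr_eq[OF measurable_join_coords fb] by (simp add: distr_join_coords)
  from integral_fst'[OF this] show ?thesis
    using integral_distr[OF measurable_join_coords fb] by (simp add: distr_join_coords)
qed

section \<open>Contractions as integrals\<close>

definition contr_arg1 :: "nat \<Rightarrow> nat \<Rightarrow> (nat \<Rightarrow> real) \<Rightarrow> (nat \<Rightarrow> real) \<Rightarrow> nat \<Rightarrow> real" where
  "contr_arg1 m s t x =
    (\<lambda>i. if i < m - s then t i else if i < m then x (i - (m - s)) else undefined)"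

definition contr_arg2 :: "nat \<Rightarrow> nat \<Rightarrow> nat \<Rightarrow> (nat \<Rightarrow> real) \<Rightarrow> (nat \<Rightarrow> real) \<Rightarrow> nat \<Rightarrow> real" where
  "contr_arg2 m k s t x =
    (\<lambda>i. if i < s then x (s - 1 - i) else if i < k then t (m - s + (i - s)) else undefined)"

definition contr_integrand :: "nat \<Rightarrow> nat \<Rightarrow> nat \<Rightarrow> ((nat \<Rightarrow> real) \<Rightarrow> 'a::times)
    \<Rightarrow> ((nat \<Rightarrow> real) \<Rightarrow> 'a) \<Rightarrow> (nat \<Rightarrow> real) \<Rightarrow> (nat \<Rightarrow> real) \<Rightarrow> 'a" where
  "contr_integrand m k s a b t x = a (contr_arg1 m s t x) * b (contr_arg2 m k s t x)"

definition contr_nn :: "nat \<Rightarrow> nat \<Rightarrow> nat \<Rightarrow> ((nat \<Rightarrow> real) \<Rightarrow> ennreal)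
    \<Rightarrow> ((nat \<Rightarrow> real) \<Rightarrow> ennreal) \<Rightarrow> (nat \<Rightarrow> real) \<Rightarrow> ennreal" where
  "contr_nn m k s a b t = (\<integral>\<^sup>+x. contr_integrand m k s a b t x \<partial>Mq s)"

lemma contr_eq_integral: "s \<noteq> 0 \<Longrightarrow> contr m k s a b t = (\<integral>x. contr_integrand m k s a b t x \<partial>Mq s)"
  by (simp add: contr_def contr_integrand_def contr_arg1_def contr_arg2_def)

lemma ennreal_abs_contr_integrand:
  "ennreal \<bar>contr_integrand m k s a b t x\<bar>
    = contr_integrand m k s (\<lambda>y. ennreal \<bar>a y\<bar>) (\<lambda>y. ennreal \<bar>b y\<bar>) t x"
  by (simp add: contr_integrand_def abs_mult ennreal_mult)

lemma contr_arg1_all: "z \<in> space (Mq c) \<Longrightarrow> contr_arg1 c c v z = z"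
  by (rule ext) (auto simp: contr_arg1_def space_Mq PiE_iff extensional_def)

lemma measurable_contr_arg1:
  "s \<le> m \<Longrightarrow> s \<le> k \<Longrightarrow>
    (\<lambda>(t, x). contr_arg1 m s t x) \<in> measurable (Mq (m + k - 2 * s) \<Otimes>\<^sub>M Mq s) (Mq m)"
  by (rule measurable_Mq_I)
    (auto simp: contr_arg1_def split_beta intro!: measurable_If_const
      measurable_compose[OF measurable_fst measurable_Mq_coord]
      measurable_compose[OF measurable_snd measurable_Mq_coord])

lemma measurable_contr_arg2:
  "s \<le> m \<Longrightarrow> s \<le> k \<Longrightarrow>
    (\<lambda>(t, x). contr_arg2 m k s t x) \<in> measurable (Mq (m + k - 2 * s) \<Otimes>\<^sub>M Mq s) (Mq k)"
  by (rule measurable_Mq_I)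
    (auto simp: contr_arg2_def split_beta intro!: measurable_If_const
      measurable_compose[OF measurable_fst measurable_Mq_coord]
      measurable_compose[OF measurable_snd measurable_Mq_coord])

lemma measurable_contr_integrand:
  fixes a b :: "(nat \<Rightarrow> real) \<Rightarrow> real"
  assumes "a \<in> borel_measurable (Mq m)" "b \<in> borel_measurable (Mq k)" "s \<le> m" "s \<le> k"
  shows "(\<lambda>(t, x). contr_integrand m k s a b t x) \<in> borel_measurable (Mq (m + k - 2 * s) \<Otimes>\<^sub>M Mq s)"
  using measurable_comp[OF measurable_contr_arg1 assms(1)]
    measurable_comp[OF measurable_contr_arg2 assms(2)] assms(3,4)
  unfolding contr_integrand_def by (simp add: comp_def split_beta')

lemma measurable_contr_integrand_nn:
  fixes a b :: "(nat \<Rightarrow> real) \<Rightarrow> ennreal"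
  assumes "a \<in> borel_measurable (Mq m)" "b \<in> borel_measurable (Mq k)" "s \<le> m" "s \<le> k"
  shows "(\<lambda>(t, x). contr_integrand m k s a b t x) \<in> borel_measurable (Mq (m + k - 2 * s) \<Otimes>\<^sub>M Mq s)"
  using measurable_comp[OF measurable_contr_arg1 assms(1)]
    measurable_comp[OF measurable_contr_arg2 assms(2)] assms(3,4)
  unfolding contr_integrand_def by (simp add: comp_def split_beta')

lemma measurable_contr_integrand_section:
  fixes a b :: "(nat \<Rightarrow> real) \<Rightarrow> real"
  assumes "a \<in> borel_measurable (Mq m)" "b \<in> borel_measurable (Mq k)" "s \<le> m" "s \<le> k"
    and "t \<in> space (Mq (m + k - 2 * s))"
  shows "contr_integrand m k s a b t \<in> borel_measurable (Mq s)"
  using measurable_comp[OF measurable_Pair1'[OF assms(5)] measurable_contr_integrand[OF assms(1-4)]]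
  by (simp add: comp_def)

lemma measurable_contr_arg2_section:
  "s \<le> m \<Longrightarrow> s \<le> k \<Longrightarrow> t \<in> space (Mq (m + k - 2 * s)) \<Longrightarrow> contr_arg2 m k s t \<in> measurable (Mq s) (Mq k)"
  using measurable_comp[OF measurable_Pair1' measurable_contr_arg2] by (simp add: comp_def)

lemma measurable_contr:
  assumes "a \<in> borel_measurable (Mq m)" "b \<in> borel_measurable (Mq k)" "1 \<le> s" "s \<le> m" "s \<le> k"
  shows "contr m k s a b \<in> borel_measurable (Mq (m + k - 2 * s))"
proof -
  interpret sigma_finite_measure "Mq s" by (rule sigma_finite_Mq)
  have "(\<lambda>t. \<integral>x. contr_integrand m k s a b t x \<partial>Mq s) \<in> borel_measurable (Mq (m + k - 2 * s))"
    using measurable_contr_integrand[OF assms(1,2,4,5)]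
    by (intro borel_measurable_lebesgue_integral) (simp add: split_beta')
  moreover have "contr m k s a b = (\<lambda>t. \<integral>x. contr_integrand m k s a b t x \<partial>Mq s)"
    using assms(3) by (intro ext contr_eq_integral) simp
  ultimately show ?thesis by simp
qed

lemma measurable_contr_nn:
  assumes "a \<in> borel_measurable (Mq m)" "b \<in> borel_measurable (Mq k)" "s \<le> m" "s \<le> k"
  shows "contr_nn m k s a b \<in> borel_measurable (Mq (m + k - 2 * s))"
proof -
  interpret sigma_finite_measure "Mq s" by (rule sigma_finite_Mq)
  show ?thesis
    using measurable_contr_integrand_nn[OF assms] unfolding contr_nn_def
    by (intro borel_measurable_nn_integral) (simp add: split_beta')
qed

section \<open>The Cauchy--Schwarz bound for contractions\<close>

lemma contr_arg1_join_coords: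
  "contr_arg1 (m + s) s (join_coords m l (u, v)) x = join_coords m s (u, x)"
  by (rule ext) (auto simp: contr_arg1_def join_coords_def)

lemma contr_arg2_join_coords:
  "contr_arg2 (m + s) (s + k) s (join_coords m k (u, v)) x = join_coords s k (rev_coords s x, v)"
  by (rule ext) (auto simp: contr_arg2_def join_coords_def rev_coords_def)

text \<open>At \<open>t = (u, v)\<close> a contraction is an inner product in the contracted variables. The order
  reversal in \<open>contr_arg2\<close> is undone by \<open>rev_coords\<close>, which preserves \<open>Mq s\<close>.\<close>

lemma contr_nn_join_coords_square_le:
  assumes a: "a \<in> borel_measurable (Mq (m + s))" and b: "b \<in> borel_measurable (Mq (s + k))"
    and u: "u \<in> space (Mq m)" and v: "v \<in> space (Mq k)"
  shows "(contr_nn (m + s) (s + k) s a b (join_coords m k (u, v)))\<^sup>2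
    \<le> (\<integral>\<^sup>+x. (a (join_coords m s (u, x)))\<^sup>2 \<partial>Mq s) * (\<integral>\<^sup>+x. (b (join_coords s k (x, v)))\<^sup>2 \<partial>Mq s)"
proof -
  have a_sec: "(\<lambda>x. a (join_coords m s (u, x))) \<in> borel_measurable (Mq s)"
    using measurable_comp[OF measurable_join_coords_left[OF u] a] by (simp add: comp_def)
  have b_sec: "(\<lambda>x. b (join_coords s k (x, v))) \<in> borel_measurable (Mq s)"
    using measurable_comp[OF measurable_join_coords_right[OF v] b] by (simp add: comp_def)
  have "(contr_nn (m + s) (s + k) s a b (join_coords m k (u, v)))\<^sup>2
      = (\<integral>\<^sup>+x. a (join_coords m s (u, x)) * b (join_coords s k (rev_coords s x, v)) \<partial>Mq s)\<^sup>2"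
    by (simp add: contr_nn_def contr_integrand_def contr_arg1_join_coords contr_arg2_join_coords)
  also have "\<dots> \<le> (\<integral>\<^sup>+x. (a (join_coords m s (u, x)))\<^sup>2 \<partial>Mq s)
      * (\<integral>\<^sup>+x. (b (join_coords s k (rev_coords s x, v)))\<^sup>2 \<partial>Mq s)"
    using a_sec measurable_comp[OF measurable_rev_coords b_sec]
    by (intro Cauchy_Schwarz_nn_integral) (simp_all add: comp_def)
  also have "(\<integral>\<^sup>+x. (b (join_coords s k (rev_coords s x, v)))\<^sup>2 \<partial>Mq s)
      = (\<integral>\<^sup>+x. (b (join_coords s k (x, v)))\<^sup>2 \<partial>Mq s)"
    using b_sec by (intro nn_integral_rev_coords[where f="\<lambda>x. (b (join_coords s k (x, v)))\<^sup>2"]) simp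
  finally show ?thesis .
qed

lemma nn_integral_contr_nn_square_le:
  assumes a: "a \<in> borel_measurable (Mq m)" and b: "b \<in> borel_measurable (Mq k)"
    and s: "s \<le> m" "s \<le> k"
  shows "(\<integral>\<^sup>+t. (contr_nn m k s a b t)\<^sup>2 \<partial>Mq (m + k - 2 * s))
    \<le> (\<integral>\<^sup>+x. (a x)\<^sup>2 \<partial>Mq m) * (\<integral>\<^sup>+x. (b x)\<^sup>2 \<partial>Mq k)"
proof -
  obtain m' k' where m: "m = m' + s" and k: "k = s + k'"
    using s by (metis add.commute le_add_diff_inverse)
  have dim: "m + k - 2 * s = m' + k'" using m k by simp
  define \<alpha> where "\<alpha> u = (\<integral>\<^sup>+x. (a (join_coords m' s (u, x)))\<^sup>2 \<partial>Mq s)" for u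
  define \<beta> where "\<beta> v = (\<integral>\<^sup>+x. (b (join_coords s k' (x, v)))\<^sup>2 \<partial>Mq s)" for v
  interpret pair_sigma_finite "Mq m'" "Mq s" by (rule pair_sigma_finite_Mq)
  have a': "a \<in> borel_measurable (Mq (m' + s))" and b': "b \<in> borel_measurable (Mq (s + k'))"
    using a b m k by simp_all
  have \<alpha>_meas: "\<alpha> \<in> borel_measurable (Mq m')"
    using measurable_comp[OF measurable_join_coords a'] unfolding \<alpha>_def
    by (intro M2.borel_measurable_nn_integral) (simp add: comp_def split_beta')
  have \<beta>_meas: "\<beta> \<in> borel_measurable (Mq k')"
  proof -
    have "(\<lambda>(v, x). (b (join_coords s k' (x, v)))\<^sup>2) \<in> borel_measurable (Mq k' \<Otimes>\<^sub>M Mq s)"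
      using measurable_comp[OF measurable_comp[OF measurable_pair_swap' measurable_join_coords] b']
      by (simp add: comp_def split_beta')
    then show ?thesis
      unfolding \<beta>_def by (intro M2.borel_measurable_nn_integral) (simp add: split_beta')
  qed
  have "(\<integral>\<^sup>+t. (contr_nn m k s a b t)\<^sup>2 \<partial>Mq (m + k - 2 * s))
      = (\<integral>\<^sup>+u. \<integral>\<^sup>+v. (contr_nn m k s a b (join_coords m' k' (u, v)))\<^sup>2 \<partial>Mq k' \<partial>Mq m')"
    unfolding dim using measurable_contr_nn[OF a b s] dim
    by (intro nn_integral_join_coords) simp
  also have "\<dots> \<le> (\<integral>\<^sup>+u. \<integral>\<^sup>+v. \<alpha> u * \<beta> v \<partial>Mq k' \<partial>Mq m')"
    unfolding m k \<alpha>_def \<beta>_def using a' b'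
    by (intro nn_integral_mono contr_nn_join_coords_square_le)
  also have "\<dots> = (\<integral>\<^sup>+u. \<alpha> u * (\<integral>\<^sup>+v. \<beta> v \<partial>Mq k') \<partial>Mq m')"
    using \<beta>_meas by (simp add: nn_integral_cmult)
  also have "\<dots> = (\<integral>\<^sup>+u. \<alpha> u \<partial>Mq m') * (\<integral>\<^sup>+v. \<beta> v \<partial>Mq k')"
    using \<alpha>_meas by (simp add: nn_integral_multc)
  also have "\<dots> = (\<integral>\<^sup>+x. (a x)\<^sup>2 \<partial>Mq m) * (\<integral>\<^sup>+x. (b x)\<^sup>2 \<partial>Mq k)"
    unfolding \<alpha>_def \<beta>_def m k using a' b'
    by (simp add: nn_integral_join_coords[where f="\<lambda>x. (a x)\<^sup>2"]
        nn_integral_join_coords_swap[where f="\<lambda>x. (b x)\<^sup>2"])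
  finally show ?thesis .
qed

lemma ennreal_power2_abs: "ennreal (x\<^sup>2) = (ennreal \<bar>x\<bar>)\<^sup>2"
  by (subst ennreal_power) simp_all

lemma L2_iff_nn_integral:
  "L2 m f \<longleftrightarrow> f \<in> borel_measurable (Mq m) \<and> (\<integral>\<^sup>+x. ennreal ((f x)\<^sup>2) \<partial>Mq m) < \<infinity>"
  by (auto simp: L2_def integrable_iff_bounded)

lemma L2norm_eq_nn_integral:
  "f \<in> borel_measurable (Mq m) \<Longrightarrow> L2norm m f = sqrt (enn2real (\<integral>\<^sup>+x. ennreal ((f x)\<^sup>2) \<partial>Mq m))"
  by (simp add: L2norm_def integral_eq_nn_integral)

lemma L2norm_cong_AE:
  assumes "f \<in> borel_measurable (Mq m)" "g \<in> borel_measurable (Mq m)" "AE x in Mq m. f x = g x"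
  shows "L2norm m f = L2norm m g"
  unfolding L2norm_def using assms by (intro arg_cong[where f=sqrt] integral_cong_AE) auto

lemma ennreal_contr_square_le:
  assumes "s \<noteq> 0"
  shows "ennreal ((contr m k s a b t)\<^sup>2)
    \<le> (contr_nn m k s (\<lambda>x. ennreal \<bar>a x\<bar>) (\<lambda>x. ennreal \<bar>b x\<bar>) t)\<^sup>2"
proof -
  have "ennreal \<bar>contr m k s a b t\<bar> \<le> (\<integral>\<^sup>+x. ennreal (norm (contr_integrand m k s a b t x)) \<partial>Mq s)"
    using integral_norm_bound_ennreal[of "Mq s" "contr_integrand m k s a b t"]
    by (cases "integrable (Mq s) (contr_integrand m k s a b t)")
      (simp_all add: assms contr_eq_integral not_integrable_integral_eq)
  also have "\<dots> = contr_nn m k s (\<lambda>x. ennreal \<bar>a x\<bar>) (\<lambda>x. ennreal \<bar>b x\<bar>) t"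
    by (simp add: contr_nn_def ennreal_abs_contr_integrand)
  finally show ?thesis
    by (simp add: ennreal_power2_abs power_mono)
qed

lemma nn_integral_contr_square_le:
  assumes "a \<in> borel_measurable (Mq m)" "b \<in> borel_measurable (Mq k)" "1 \<le> s" "s \<le> m" "s \<le> k"
  shows "(\<integral>\<^sup>+t. ennreal ((contr m k s a b t)\<^sup>2) \<partial>Mq (m + k - 2 * s))
    \<le> (\<integral>\<^sup>+x. ennreal ((a x)\<^sup>2) \<partial>Mq m) * (\<integral>\<^sup>+x. ennreal ((b x)\<^sup>2) \<partial>Mq k)"
proof -
  have "(\<integral>\<^sup>+t. ennreal ((contr m k s a b t)\<^sup>2) \<partial>Mq (m + k - 2 * s))
      \<le> (\<integral>\<^sup>+t. (contr_nn m k s (\<lambda>x. ennreal \<bar>a x\<bar>) (\<lambda>x. ennreal \<bar>b x\<bar>) t)\<^sup>2 \<partial>Mq (m + k - 2 * s))"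
    using assms(3) by (intro nn_integral_mono ennreal_contr_square_le) simp
  also have "\<dots> \<le> (\<integral>\<^sup>+x. (ennreal \<bar>a x\<bar>)\<^sup>2 \<partial>Mq m) * (\<integral>\<^sup>+x. (ennreal \<bar>b x\<bar>)\<^sup>2 \<partial>Mq k)"
    using assms by (intro nn_integral_contr_nn_square_le) auto
  finally show ?thesis
    by (simp add: ennreal_power2_abs)
qed

lemma L2_contr:
  assumes "L2 m a" "L2 k b" "1 \<le> s" "s \<le> m" "s \<le> k"
  shows "L2 (m + k - 2 * s) (contr m k s a b)"
proof -
  have a: "a \<in> borel_measurable (Mq m)" "(\<integral>\<^sup>+x. ennreal ((a x)\<^sup>2) \<partial>Mq m) < \<infinity>"
    and b: "b \<in> borel_measurable (Mq k)" "(\<integral>\<^sup>+x. ennreal ((b x)\<^sup>2) \<partial>Mq k) < \<infinity>"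
    using assms(1,2) by (auto simp: L2_iff_nn_integral)
  have "(\<integral>\<^sup>+x. ennreal ((a x)\<^sup>2) \<partial>Mq m) * (\<integral>\<^sup>+x. ennreal ((b x)\<^sup>2) \<partial>Mq k) < \<infinity>"
    using a(2) b(2) by (simp add: ennreal_mult_less_top)
  then show ?thesis
    using measurable_contr[OF a(1) b(1) assms(3-5)]
      nn_integral_contr_square_le[OF a(1) b(1) assms(3-5)]
    by (auto simp: L2_iff_nn_integral)
qed

lemma L2norm_contr_le:
  assumes "L2 m a" "L2 k b" "1 \<le> s" "s \<le> m" "s \<le> k"
  shows "L2norm (m + k - 2 * s) (contr m k s a b) \<le> L2norm m a * L2norm k b"
proof -
  have a: "a \<in> borel_measurable (Mq m)" "(\<integral>\<^sup>+x. ennreal ((a x)\<^sup>2) \<partial>Mq m) < \<infinity>"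
    and b: "b \<in> borel_measurable (Mq k)" "(\<integral>\<^sup>+x. ennreal ((b x)\<^sup>2) \<partial>Mq k) < \<infinity>"
    using assms(1,2) by (auto simp: L2_iff_nn_integral)
  have "enn2real (\<integral>\<^sup>+t. ennreal ((contr m k s a b t)\<^sup>2) \<partial>Mq (m + k - 2 * s))
      \<le> enn2real ((\<integral>\<^sup>+x. ennreal ((a x)\<^sup>2) \<partial>Mq m) * (\<integral>\<^sup>+x. ennreal ((b x)\<^sup>2) \<partial>Mq k))"
    using a b assms(3-5)
    by (intro enn2real_mono nn_integral_contr_square_le) (auto simp: ennreal_mult_less_top)
  then show ?thesis
    using a(1) b(1) measurable_contr[OF a(1) b(1) assms(3-5)]
    by (simp add: L2norm_eq_nn_integral enn2real_mult real_sqrt_mult[symmetric])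
qed

section \<open>Contractions of tensor products\<close>

definition take_coords :: "nat \<Rightarrow> (nat \<Rightarrow> real) \<Rightarrow> nat \<Rightarrow> real" where
  "take_coords p u = (\<lambda>i. if i < p then u i else undefined)"

definition drop_coords :: "nat \<Rightarrow> nat \<Rightarrow> (nat \<Rightarrow> real) \<Rightarrow> nat \<Rightarrow> real" where
  "drop_coords p c u = (\<lambda>i. if i < c then u (p + i) else undefined)"

lemma tensor_eq: "tensor m k a b t = a (take_coords m t) * b (drop_coords m k t)"
  by (simp add: tensor_def take_coords_def drop_coords_def)

lemma measurable_take_coords: "p \<le> n \<Longrightarrow> take_coords p \<in> measurable (Mq n) (Mq p)"
  by (rule measurable_Mq_I) (auto simp: take_coords_def intro!: measurable_Mq_coord)

lemma measurable_drop_coords: "p + c \<le> n \<Longrightarrow> drop_coords p c \<in> measurable (Mq n) (Mq c)"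
  by (rule measurable_Mq_I) (auto simp: drop_coords_def intro!: measurable_Mq_coord)

lemma measurable_tensor:
  assumes "a \<in> borel_measurable (Mq m)" "b \<in> borel_measurable (Mq k)"
  shows "tensor m k a b \<in> borel_measurable (Mq (m + k))"
  using measurable_comp[OF measurable_take_coords assms(1)]
    measurable_comp[OF measurable_drop_coords assms(2)]
  unfolding tensor_eq[abs_def] by (simp add: comp_def)

lemma contr_tensor_left:
  assumes "1 \<le> s" "s \<le> m" "s \<le> k"
  shows "contr (p + m) k s (tensor p m g a) b = tensor p (m + k - 2 * s) g (contr m k s a b)"
proof
  fix u
  let ?v = "drop_coords p (m + k - 2 * s) u"
  have "contr_integrand (p + m) k s (tensor p m g a) b u y
      = g (take_coords p u) * contr_integrand m k s a b ?v y" for y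
  proof -
    have "take_coords p (contr_arg1 (p + m) s u y) = take_coords p u"
      and "drop_coords p m (contr_arg1 (p + m) s u y) = contr_arg1 m s ?v y"
      and "contr_arg2 (p + m) k s u y = contr_arg2 m k s ?v y"
      using assms
      by (auto simp: fun_eq_iff take_coords_def drop_coords_def contr_arg1_def contr_arg2_def
          add.assoc)
    then show ?thesis
      by (simp add: contr_integrand_def tensor_eq mult.assoc)
  qed
  then show "contr (p + m) k s (tensor p m g a) b u
      = tensor p (m + k - 2 * s) g (contr m k s a b) u"
    using assms by (simp add: contr_eq_integral tensor_eq)
qed

lemma contr_integrand_tensor_join_coords:
  assumes "s \<le> d" "z \<in> space (Mq c)"
  shows "contr_integrand (n + s + c) (c + d) (s + c) (tensor (n + s) c g F) f t
      (join_coords s c (y, z))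
    = g (contr_arg1 (n + s) s t y)
      * (F z * f (contr_arg2 c (c + d) c (contr_arg2 (n + s) d s t y) z))"
proof -
  let ?x = "join_coords s c (y, z)"
  have "take_coords (n + s) (contr_arg1 (n + s + c) (s + c) t ?x) = contr_arg1 (n + s) s t y"
    by (auto simp: fun_eq_iff take_coords_def contr_arg1_def join_coords_def)
  moreover have "drop_coords (n + s) c (contr_arg1 (n + s + c) (s + c) t ?x) = z"
    using assms(2)
    by (auto simp: fun_eq_iff drop_coords_def contr_arg1_def join_coords_def space_Mq PiE_iff
        extensional_def)
  moreover have "contr_arg2 (n + s + c) (c + d) (s + c) t ?x
      = contr_arg2 c (c + d) c (contr_arg2 (n + s) d s t y) z"
    using assms(1) by (auto simp: fun_eq_iff contr_arg2_def join_coords_def add.commute)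
  ultimately show ?thesis
    by (simp add: contr_integrand_def tensor_eq mult.assoc)
qed

lemma nn_integral_abs_contr_integrand_tensor:
  assumes g: "g \<in> borel_measurable (Mq (n + s))" and F: "F \<in> borel_measurable (Mq c)"
    and f: "f \<in> borel_measurable (Mq (c + d))" and "s \<le> d" and t: "t \<in> space (Mq (n + (d - s)))"
  shows "(\<integral>\<^sup>+x. ennreal \<bar>contr_integrand (n + s + c) (c + d) (s + c) (tensor (n + s) c g F) f t x\<bar>
      \<partial>Mq (s + c))
    = contr_nn (n + s) d s (\<lambda>x. ennreal \<bar>g x\<bar>)
        (contr_nn c (c + d) c (\<lambda>x. ennreal \<bar>F x\<bar>) (\<lambda>x. ennreal \<bar>f x\<bar>)) t"
    (is "(\<integral>\<^sup>+x. ennreal \<bar>?\<Phi> x\<bar> \<partial>Mq (s + c)) = _")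
proof -
  let ?V = "contr_arg2 (n + s) d s t"
  let ?G = "\<lambda>y. ennreal \<bar>g (contr_arg1 (n + s) s t y)\<bar>"
  let ?H = "\<lambda>v z. ennreal \<bar>F z\<bar> * ennreal \<bar>f (contr_arg2 c (c + d) c v z)\<bar>"
  have "?\<Phi> \<in> borel_measurable (Mq (s + c))"
    using assms measurable_tensor[OF g F]
    by (intro measurable_contr_integrand_section) (auto simp: algebra_simps)
  then have "(\<integral>\<^sup>+x. ennreal \<bar>?\<Phi> x\<bar> \<partial>Mq (s + c))
      = (\<integral>\<^sup>+y. \<integral>\<^sup>+z. ennreal \<bar>?\<Phi> (join_coords s c (y, z))\<bar> \<partial>Mq c \<partial>Mq s)"
    by (intro nn_integral_join_coords) simp
  also have "\<dots> = (\<integral>\<^sup>+y. ?G y * (\<integral>\<^sup>+z. ?H (?V y) z \<partial>Mq c) \<partial>Mq s)"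
  proof (intro nn_integral_cong)
    fix y assume y: "y \<in> space (Mq s)"
    have "?V y \<in> space (Mq d)"
      using measurable_space[OF measurable_contr_arg2_section y] t \<open>s \<le> d\<close>
      by (simp add: algebra_simps)
    then have "?H (?V y) \<in> borel_measurable (Mq c)"
      using F measurable_comp[OF measurable_contr_arg2_section f] by (simp add: comp_def)
    then show "(\<integral>\<^sup>+z. ennreal \<bar>?\<Phi> (join_coords s c (y, z))\<bar> \<partial>Mq c) = ?G y * (\<integral>\<^sup>+z. ?H (?V y) z \<partial>Mq c)"
      using \<open>s \<le> d\<close>
      by (simp add: nn_integral_cmult[symmetric] contr_integrand_tensor_join_coords
          abs_mult ennreal_mult mult.assoc cong: nn_integral_cong)
  qed
  also have "\<dots> = contr_nn (n + s) d s (\<lambda>x. ennreal \<bar>g x\<bar>)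
      (contr_nn c (c + d) c (\<lambda>x. ennreal \<bar>F x\<bar>) (\<lambda>x. ennreal \<bar>f x\<bar>)) t"
    by (simp add: contr_nn_def contr_integrand_def contr_arg1_all cong: nn_integral_cong)
  finally show ?thesis .
qed

lemma contr_tensor_contr_eq:
  assumes g: "g \<in> borel_measurable (Mq (n + s))" and F: "F \<in> borel_measurable (Mq c)"
    and f: "f \<in> borel_measurable (Mq (c + d))" and "1 \<le> s" "s \<le> d" "1 \<le> c"
    and t: "t \<in> space (Mq (n + (d - s)))"
    and fin: "contr_nn (n + s) d s (\<lambda>x. ennreal \<bar>g x\<bar>)
      (contr_nn c (c + d) c (\<lambda>x. ennreal \<bar>F x\<bar>) (\<lambda>x. ennreal \<bar>f x\<bar>)) t < \<infinity>"
  shows "contr (n + s + c) (c + d) (s + c) (tensor (n + s) c g F) f t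
    = contr (n + s) d s g (contr c (c + d) c F f) t"
proof -
  let ?\<Phi> = "contr_integrand (n + s + c) (c + d) (s + c) (tensor (n + s) c g F) f t"
  let ?V = "contr_arg2 (n + s) d s t"
  have "?\<Phi> \<in> borel_measurable (Mq (s + c))"
    using assms measurable_tensor[OF g F]
    by (intro measurable_contr_integrand_section) (auto simp: algebra_simps)
  then have "integrable (Mq (s + c)) ?\<Phi>"
    using fin nn_integral_abs_contr_integrand_tensor[OF g F f \<open>s \<le> d\<close> t]
    by (intro integrableI_bounded) (simp_all add: real_norm_def)
  then have "contr (n + s + c) (c + d) (s + c) (tensor (n + s) c g F) f t
      = (\<integral>y. \<integral>z. ?\<Phi> (join_coords s c (y, z)) \<partial>Mq c \<partial>Mq s)"
    using \<open>1 \<le> s\<close> by (simp add: contr_eq_integral integral_join_coords)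
  also have "\<dots> = (\<integral>y. g (contr_arg1 (n + s) s t y)
      * (\<integral>z. F z * f (contr_arg2 c (c + d) c (?V y) z) \<partial>Mq c) \<partial>Mq s)"
    using \<open>s \<le> d\<close>
    by (simp add: contr_integrand_tensor_join_coords cong: Bochner_Integration.integral_cong)
  also have "\<dots> = contr (n + s) d s g (contr c (c + d) c F f) t"
    using \<open>1 \<le> s\<close> \<open>1 \<le> c\<close>
    by (simp add: contr_eq_integral contr_integrand_def contr_arg1_all
        cong: Bochner_Integration.integral_cong)
  finally show ?thesis .
qed

lemma AE_contr_nn_finite:
  assumes "a \<in> borel_measurable (Mq m)" "b \<in> borel_measurable (Mq k)" "s \<le> m" "s \<le> k"
    and "(\<integral>\<^sup>+x. (a x)\<^sup>2 \<partial>Mq m) < \<infinity>" "(\<integral>\<^sup>+x. (b x)\<^sup>2 \<partial>Mq k) < \<infinity>"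
  shows "(\<integral>\<^sup>+t. (contr_nn m k s a b t)\<^sup>2 \<partial>Mq (m + k - 2 * s)) < \<infinity>"
    and "AE t in Mq (m + k - 2 * s). contr_nn m k s a b t < \<infinity>"
proof -
  show fin: "(\<integral>\<^sup>+t. (contr_nn m k s a b t)\<^sup>2 \<partial>Mq (m + k - 2 * s)) < \<infinity>"
    using nn_integral_contr_nn_square_le[OF assms(1-4)] assms(5,6)
    by (auto simp: ennreal_mult_less_top intro: le_less_trans)
  have "AE t in Mq (m + k - 2 * s). (contr_nn m k s a b t)\<^sup>2 \<noteq> \<infinity>"
    using measurable_contr_nn[OF assms(1-4)] fin by (intro nn_integral_noteq_infinite) auto
  then show "AE t in Mq (m + k - 2 * s). contr_nn m k s a b t < \<infinity>"
    by eventually_elim (auto simp: power2_eq_square ennreal_mult_eq_top_iff top.not_eq_extremum)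
qed

lemma contr_tensor_contr_AE:
  assumes g: "L2 (n + s) g" and F: "L2 c F" and f: "L2 (c + d) f" and "1 \<le> s" "s \<le> d" "1 \<le> c"
  shows "AE t in Mq (n + (d - s)). contr (n + s + c) (c + d) (s + c) (tensor (n + s) c g F) f t
    = contr (n + s) d s g (contr c (c + d) c F f) t"
proof -
  let ?H = "contr_nn c (c + d) c (\<lambda>x. ennreal \<bar>F x\<bar>) (\<lambda>x. ennreal \<bar>f x\<bar>)"
  have meas: "g \<in> borel_measurable (Mq (n + s))" "F \<in> borel_measurable (Mq c)"
    "f \<in> borel_measurable (Mq (c + d))"
    using g F f by (simp_all add: L2_iff_nn_integral)
  have H: "?H \<in> borel_measurable (Mq d)" "(\<integral>\<^sup>+t. (?H t)\<^sup>2 \<partial>Mq d) < \<infinity>"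
    using measurable_contr_nn[of _ c _ "c + d" c] AE_contr_nn_finite(1)[of _ c _ "c + d" c] meas F f
    by (simp_all add: L2_iff_nn_integral ennreal_power2_abs[symmetric])
  have dim: "n + s + d - 2 * s = n + (d - s)"
    using \<open>s \<le> d\<close> by simp
  have "AE t in Mq (n + s + d - 2 * s). contr_nn (n + s) d s (\<lambda>x. ennreal \<bar>g x\<bar>) ?H t < \<infinity>"
    using AE_contr_nn_finite(2)[OF _ H(1) _ _ _ H(2), of "\<lambda>x. ennreal \<bar>g x\<bar>" "n + s" s]
      meas g \<open>s \<le> d\<close>
    by (simp add: L2_iff_nn_integral ennreal_power2_abs[symmetric])
  then show ?thesis
    unfolding dim using meas \<open>1 \<le> s\<close> \<open>s \<le> d\<close> \<open>1 \<le> c\<close>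
    by (elim AE_mp, intro AE_I2 impI contr_tensor_contr_eq)
qed

lemma contr_tensor_triple_AE:
  fixes f g :: "(nat \<Rightarrow> real) \<Rightarrow> real"
  assumes f: "L2 q f" and g: "L2 p g" and r: "1 \<le> r" "r < q"
    and r2: "r2 \<le> q" "2 * q < r2 + 2 * r" and p: "r2 + 2 * r - 2 * q \<le> p"
  shows "AE t in Mq (p + 3 * q - 2 * r - 2 * r2).
    contr (p + 2 * q - 2 * r) q r2 (contr (p + q) q r (tensor p q g f) f) f t
      = contr p (2 * r - q) (r2 + 2 * r - 2 * q) g
          (contr (2 * q - 2 * r) q (2 * q - 2 * r) (contr q q r f f) f) t"
proof -
  define c where "c = 2 * q - 2 * r"
  define d where "d = 2 * r - q"
  define s where "s = r2 + 2 * r - 2 * q"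
  define n where "n = p - s"
  have dim: "q + q - 2 * r = c" "n + s + c = p + 2 * q - 2 * r" "c + d = q" "s + c = r2"
    "n + s = p" "n + (d - s) = p + 3 * q - 2 * r - 2 * r2"
    and bounds: "1 \<le> s" "s \<le> d" "1 \<le> c"
    using r r2 p unfolding c_def d_def s_def n_def by arith+
  have F: "L2 c (contr q q r f f)"
    using L2_contr[OF f f, of r, unfolded dim(1)] r by simp
  have "tensor p c g (contr q q r f f) = contr (p + q) q r (tensor p q g f) f"
    using contr_tensor_left[of r q q p g f f, unfolded dim(1)] r by simp
  moreover have "AE t in Mq (n + (d - s)).
      contr (n + s + c) (c + d) (s + c) (tensor (n + s) c g (contr q q r f f)) f t
        = contr (n + s) d s g (contr c (c + d) c (contr q q r f f) f) t"
    using f g F bounds by (intro contr_tensor_contr_AE) (simp_all add: dim(3,5))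
  ultimately show ?thesis
    unfolding dim(2) unfolding dim(3-6) by (simp only: c_def d_def s_def)
qed

lemma L2norm_contr_tensor_triple_le:
  fixes f g :: "(nat \<Rightarrow> real) \<Rightarrow> real"
  assumes f: "L2 q f" and g: "L2 p g" and r: "1 \<le> r" "r < q"
    and r2: "r2 \<le> q" "2 * q < r2 + 2 * r" and p: "r2 + 2 * r - 2 * q \<le> p"
  shows "L2norm (p + 3 * q - 2 * r - 2 * r2)
      (contr (p + 2 * q - 2 * r) q r2 (contr (p + q) q r (tensor p q g f) f) f)
    \<le> L2norm p g * L2norm (2 * r - q) (contr (2 * q - 2 * r) q (2 * q - 2 * r) (contr q q r f f) f)"
proof -
  define h where "h = contr (2 * q - 2 * r) q (2 * q - 2 * r) (contr q q r f f) f"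
  define D where "D = p + 3 * q - 2 * r - 2 * r2"
  have dim: "q + q - 2 * r = 2 * q - 2 * r" "2 * q - 2 * r + q - 2 * (2 * q - 2 * r) = 2 * r - q"
    "p + q + q - 2 * r = p + 2 * q - 2 * r" "p + 2 * q - 2 * r + q - 2 * r2 = D"
    "p + (2 * r - q) - 2 * (r2 + 2 * r - 2 * q) = D"
    using r r2 p unfolding D_def by auto
  have h: "L2 (2 * r - q) h"
    using L2_contr[OF L2_contr[OF f f, of r, unfolded dim(1)] f, of "2 * q - 2 * r",
        unfolded dim(2)] r r2
    unfolding h_def by simp
  have fg: "f \<in> borel_measurable (Mq q)" "g \<in> borel_measurable (Mq p)"
    and hm: "h \<in> borel_measurable (Mq (2 * r - q))"
    using f g h by (simp_all add: L2_iff_nn_integral)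
  have "contr (p + 2 * q - 2 * r) q r2 (contr (p + q) q r (tensor p q g f) f) f
      \<in> borel_measurable (Mq D)"
    using measurable_contr[OF measurable_contr[OF measurable_tensor[OF fg(2,1)] fg(1), of r,
        unfolded dim(3)] fg(1), of r2, unfolded dim(4)] r r2 p
    by simp
  moreover have "contr p (2 * r - q) (r2 + 2 * r - 2 * q) g h \<in> borel_measurable (Mq D)"
    using measurable_contr[OF fg(2) hm, of "r2 + 2 * r - 2 * q", unfolded dim(5)] r r2 p by simp
  ultimately have
    "L2norm D (contr (p + 2 * q - 2 * r) q r2 (contr (p + q) q r (tensor p q g f) f) f)
      = L2norm D (contr p (2 * r - q) (r2 + 2 * r - 2 * q) g h)"
    using contr_tensor_triple_AE[OF assms] unfolding h_def D_def by (rule L2norm_cong_AE)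
  also have "\<dots> \<le> L2norm p g * L2norm (2 * r - q) h"
    using L2norm_contr_le[OF g h, of "r2 + 2 * r - 2 * q", unfolded dim(5)] r r2 p by simp
  finally show ?thesis
    unfolding h_def D_def .
qed

theorem lemma3p5:
  fixes q p r r2 :: nat and f g :: "(nat \<Rightarrow> real) \<Rightarrow> real"
  assumes "q \<ge> 2" and "L2 q f"
    and "r \<in> {1..q-1}" and "r2 \<in> {1..q}" and "r2 + 2 * r > 2 * q"
    and "p \<ge> 1" and "L2 p g" and "r2 + 2 * r - 2 * q \<le> p"
  shows "(AE t in Mq (p + 3 * q - 2 * r - 2 * r2).
            contr (p + 2 * q - 2 * r) q r2 (contr (p + q) q r (tensor p q g f) f) f t
          = contr p (2 * r - q) (r2 + 2 * r - 2 * q) g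
              (contr (2 * q - 2 * r) q (2 * q - 2 * r) (contr q q r f f) f) t)
    \<and> (\<forall>fs :: nat \<Rightarrow> (nat \<Rightarrow> real) \<Rightarrow> real.
         (\<forall>n. L2 q (fs n)) \<longrightarrow>
         (\<forall>s s2. s \<in> {1..q-1} \<longrightarrow> s2 \<in> {1..q-1} \<longrightarrow> s2 + 2 * s \<le> 2 * q \<longrightarrow> s + s2 \<noteq> q \<longrightarrow>
            (\<lambda>n. L2norm (3 * q - 2 * s - 2 * s2)
                    (contr (2 * q - 2 * s) q s2 (contr q q s (fs n) (fs n)) (fs n))) \<longlonglongrightarrow> 0) \<longrightarrow>
         (\<lambda>n. L2norm (p + 3 * q - 2 * r - 2 * r2)
                 (contr (p + 2 * q - 2 * r) q r2 (contr (p + q) q r (tensor p q g (fs n)) (fs n)) (fs n)))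
           \<longlonglongrightarrow> 0)"
proof (intro conjI allI impI)
  have r: "1 \<le> r" "r < q" and r2: "r2 \<le> q" "2 * q < r2 + 2 * r"
    using assms(3-5) by auto
  show "AE t in Mq (p + 3 * q - 2 * r - 2 * r2).
      contr (p + 2 * q - 2 * r) q r2 (contr (p + q) q r (tensor p q g f) f) f t
        = contr p (2 * r - q) (r2 + 2 * r - 2 * q) g
            (contr (2 * q - 2 * r) q (2 * q - 2 * r) (contr q q r f f) f) t"
    using contr_tensor_triple_AE[OF assms(2,7) r r2 assms(8)] .
  fix fs :: "nat \<Rightarrow> (nat \<Rightarrow> real) \<Rightarrow> real"
  assume fs: "\<forall>n. L2 q (fs n)"
    and hyp: "\<forall>s s2. s \<in> {1..q-1} \<longrightarrow> s2 \<in> {1..q-1} \<longrightarrow> s2 + 2 * s \<le> 2 * q \<longrightarrow> s + s2 \<noteq> q \<longrightarrow>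
      (\<lambda>n. L2norm (3 * q - 2 * s - 2 * s2)
        (contr (2 * q - 2 * s) q s2 (contr q q s (fs n) (fs n)) (fs n))) \<longlonglongrightarrow> 0"
  define N where "N n = L2norm (2 * r - q)
    (contr (2 * q - 2 * r) q (2 * q - 2 * r) (contr q q r (fs n) (fs n)) (fs n))" for n
  have "r \<in> {1..q-1}" "2 * q - 2 * r \<in> {1..q-1}" "2 * q - 2 * r + 2 * r \<le> 2 * q"
    "r + (2 * q - 2 * r) \<noteq> q" and dim: "3 * q - 2 * r - 2 * (2 * q - 2 * r) = 2 * r - q"
    using r r2 by auto
  from hyp[rule_format, OF this(1-4), unfolded dim] have "N \<longlonglongrightarrow> 0"
    unfolding N_def .
  then have lim: "(\<lambda>n. L2norm p g * N n) \<longlonglongrightarrow> 0"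
    by (rule tendsto_mult_right_zero)
  show "(\<lambda>n. L2norm (p + 3 * q - 2 * r - 2 * r2)
      (contr (p + 2 * q - 2 * r) q r2 (contr (p + q) q r (tensor p q g (fs n)) (fs n)) (fs n))) \<longlonglongrightarrow> 0"
    by (rule tendsto_sandwich[OF _ _ tendsto_const lim])
      (use fs L2norm_contr_tensor_triple_le[OF _ assms(7) r r2 assms(8)]
        in \<open>simp_all add: N_def L2norm_def\<close>)
qed

end
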